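(* There is no SLCS formula $\varphi$ such that for every topological neighbourhood model $\mathcal M$ with underlying space $(X,\mathcal N)$: $(X,\mathcal N)$ is $T_1$-separated if and only if $\mathcal M,x\models\varphi$ for every $x\in X$. (Concretely: for an uncountable set $X$ with the countable complement topology and any valuation $V_1$, and the space $X'=X\cup\{x'\mid x\in X\}$ obtained by doubling every point, with the double pointed countable complement topology and valuation $V_2(x)=V_2(x')=V_1(x)$, there is a path preserving bisimulation between the two topological models whose point relation relates each $x$ to both $x$ and $x'$; the first model is $T_1$-separated, the second is not.)
   Context: A neighbourhood space $(X,\mathcal N)$ assigns to each $x\in X$ a filter $\mathcal N(x)$ on $X$ (closed under finite intersections and supersets, not containing $\emptyset$) such that $x\in N$ for all $N\in\mathcal N(x)$. Closure: $\mathcal C(A)=\{x\mid\forall N\in\mathcal N(x): A\cap N\neq\emptyset\}$. It is topological if for every $x$ and $N\in\mathcal N(x)$ there is $M\in\mathcal N(x)$ with $N\in\mathcal N(y)$ for all $y\in M$ (equivalently, the neighbourhood filters of a topology). A topological neighbourhood model is $\mathcal M=((X,\mathcal N),\mathbb R,V)$ with $(X,\mathcal N)$ topological, index space the reals with the standard topology, standard order and $0$, and valuation $V:X\to\mathcal P(\mathsf P)$ for a fixed countable set $\mathsf P$ of atoms. A path is a continuous map $p:\mathbb R\to X$ (continuity: $p^{-1}[N]$ is a neighbourhood of $t$ for every neighbourhood $N$ of $p(t)$). The countable complement topology on uncountable $X$: $\mathcal N(x)=\{N\mid \exists Y\,(x\in Y\subseteq N,\ X\setminus Y \text{ countable})\}$.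 The double pointed version on $X'$: same with $Y$ ranging over doublings $Y\cup\{y'\mid y\in Y\}$ of such sets. The space is $T_1$-separated if $\{x\}\cap\mathcal C(\{y\})=\mathcal C(\{x\})\cap\{y\}=\emptyset$ for all distinct $x,y$. SLCS formulas: $\varphi::=a\mid\top\mid\neg\varphi\mid\varphi\wedge\varphi\mid\mathcal N\varphi\mid\varphi\,\mathcal R\,\varphi\mid\varphi\,\mathcal P\,\varphi$ with $a\in\mathsf P$. Semantics: $\mathcal M,x\models a$ iff $a\in V(x)$; Booleans as usual; $\mathcal M,x\models\mathcal N\varphi$ iff $x\in\mathcal C(\{y\mid\mathcal M,y\models\varphi\})$; $\mathcal M,x\models\varphi\,\mathcal R\,\psi$ iff there are a path $p$ and $n$ with $p(n)=x$, $\mathcal M,p(0)\models\psi$ and $\mathcal M,p(i)\models\varphi$ for all $0<i\le n$; $\mathcal M,x\models\varphi\,\mathcal P\,\psi$ iff there are a path $p$ with $p(0)=x$ and $n$ with $\mathcal M,p(n)\models\psi$ and $\mathcal M,p(i)\models\varphi$ for all $0\le i<n$. Path preserving bisimulation: for models $\mathcal M_1,\mathcal M_2$ over the same index space with path sets $\mathcal P_1,\mathcal P_2$, a triple $(Z_{\mathcal N},Z_1,Z_2)$, $\emptyset\ne Z_{\mathcal N}\subseteq X_1\times X_2$, $Z_1\subseteq(\mathcal P_1\times I)\times(\mathcal P_2\times I)$, $Z_2\subseteq(\mathcal P_2\times I)\times(\mathcal P_1\times I)$, such that: (1) at each pair $x_1Z_{\mathcal N}x_2$: $V_1(x_1)=V_2(x_2)$;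 for every $N_2\in\mathcal N_2(x_2)$ there is $N_1\in\mathcal N_1(x_1)$ with every $y_1\in N_1$ related to some $y_2\in N_2$; and symmetrically for every $N_1\in\mathcal N_1(x_1)$; (2) if $x_1Z_{\mathcal N}x_2$, $p(0)=x_1$, $n\ne0$, there are $q$ with $q(0)=x_2$ and $m$ with $p(n)Z_{\mathcal N}q(m)$, $(p,n)Z_1(q,m)$; (3) if $x_1Z_{\mathcal N}x_2$, $p(n)=x_1$, $n\ne0$, there are $q,m$ with $q(m)=x_2$, $p(0)Z_{\mathcal N}q(0)$, $(p,n)Z_1(q,m)$; (4) if $(p,n)Z_1(q,m)$ and $0<k_q<m$, there is $0<k_p<n$ with $p(k_p)Z_{\mathcal N}q(k_q)$; (5) if $x_1Z_{\mathcal N}x_2$, $q(0)=x_2$, $m\ne0$, there are $p$ with $p(0)=x_1$ and $n$ with $p(n)Z_{\mathcal N}q(m)$, $(q,m)Z_2(p,n)$; (6) if $x_1Z_{\mathcal N}x_2$, $q(m)=x_2$, $m\neq0$, there are $p,n$ with $p(n)=x_1$, $p(0)Z_{\mathcal N}q(0)$, $(q,m)Z_2(p,n)$; (7) if $(q,m)Z_2(p,n)$ and $0<k_p<n$, there is $0<k_q<m$ with $p(k_p)Z_{\mathcal N}q(k_q)$. *)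

theory Defs
  imports "HOL-Analysis.Analysis"
begin

text \<open>Atoms are natural numbers (a fixed countable set of atoms); a valuation is V :: 'a => nat set.\<close>

definition filter_on :: "'a set \<Rightarrow> 'a set set \<Rightarrow> bool" where
  "filter_on X F \<longleftrightarrow> F \<noteq> {} \<and> F \<subseteq> Pow X \<and> {} \<notin> F \<and>
     (\<forall>A\<in>F. \<forall>B\<in>F. A \<inter> B \<in> F) \<and> (\<forall>A\<in>F. \<forall>B. A \<subseteq> B \<and> B \<subseteq> X \<longrightarrow> B \<in> F)"

definition nbh_space :: "'a set \<Rightarrow> ('a \<Rightarrow> 'a set set) \<Rightarrow> bool" where
  "nbh_space X Nb \<longleftrightarrow> (\<forall>x\<in>X. filter_on X (Nb x) \<and> (\<forall>N\<in>Nb x. x \<in> N))"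

definition topological_nbh :: "'a set \<Rightarrow> ('a \<Rightarrow> 'a set set) \<Rightarrow> bool" where
  "topological_nbh X Nb \<longleftrightarrow> nbh_space X Nb \<and>
     (\<forall>x\<in>X. \<forall>N\<in>Nb x. \<exists>M\<in>Nb x. \<forall>y\<in>M. N \<in> Nb y)"

definition nclosure :: "'a set \<Rightarrow> ('a \<Rightarrow> 'a set set) \<Rightarrow> 'a set \<Rightarrow> 'a set" where
  "nclosure X Nb A = {x\<in>X. \<forall>N\<in>Nb x. A \<inter> N \<noteq> {}}"

definition T1_sep :: "'a set \<Rightarrow> ('a \<Rightarrow> 'a set set) \<Rightarrow> bool" where
  "T1_sep X Nb \<longleftrightarrow> (\<forall>x\<in>X. \<forall>y\<in>X. x \<noteq> y \<longrightarrow>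
      {x} \<inter> nclosure X Nb {y} = {} \<and> nclosure X Nb {x} \<inter> {y} = {})"

definition npath :: "'a set \<Rightarrow> ('a \<Rightarrow> 'a set set) \<Rightarrow> (real \<Rightarrow> 'a) \<Rightarrow> bool" where
  "npath X Nb p \<longleftrightarrow> range p \<subseteq> X \<and>
     (\<forall>t. \<forall>N\<in>Nb (p t). \<exists>U. open U \<and> t \<in> U \<and> U \<subseteq> p -` N)"

datatype slcs = Atom nat | Top | Neg slcs | Conj slcs slcs | Near slcs
  | Reach slcs slcs | Pass slcs slcs

primrec sem :: "'a set \<Rightarrow> ('a \<Rightarrow> 'a set set) \<Rightarrow> ('a \<Rightarrow> nat set) \<Rightarrow> slcs \<Rightarrow> 'a set" where
  "sem X Nb V (Atom a) = {x\<in>X. a \<in> V x}"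
| "sem X Nb V Top = X"
| "sem X Nb V (Neg \<phi>) = X - sem X Nb V \<phi>"
| "sem X Nb V (Conj \<phi> \<psi>) = sem X Nb V \<phi> \<inter> sem X Nb V \<psi>"
| "sem X Nb V (Near \<phi>) = nclosure X Nb (sem X Nb V \<phi>)"
| "sem X Nb V (Reach \<phi> \<psi>) = {x\<in>X. \<exists>p n. npath X Nb p \<and> p n = x \<and> p 0 \<in> sem X Nb V \<psi> \<and>
       (\<forall>i. 0 < i \<and> i \<le> n \<longrightarrow> p i \<in> sem X Nb V \<phi>)}"
| "sem X Nb V (Pass \<phi> \<psi>) = {x\<in>X. \<exists>p n. npath X Nb p \<and> p 0 = x \<and> p n \<in> sem X Nb V \<psi> \<and>
       (\<forall>i. 0 \<le> i \<and> i < n \<longrightarrow> p i \<in> sem X Nb V \<phi>)}"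

text \<open>Countable complement topology and its double pointed version on X \<times> UNIV
  (x is (x,False), x' is (x,True)).\<close>
definition ccc_nbh :: "'a set \<Rightarrow> 'a \<Rightarrow> 'a set set" where
  "ccc_nbh X x = {N. N \<subseteq> X \<and> (\<exists>Y. x \<in> Y \<and> Y \<subseteq> N \<and> countable (X - Y))}"

definition dccc_nbh :: "'a set \<Rightarrow> 'a \<times> bool \<Rightarrow> ('a \<times> bool) set set" where
  "dccc_nbh X z = {N. N \<subseteq> X \<times> UNIV \<and>
      (\<exists>Y. fst z \<in> Y \<and> Y \<times> UNIV \<subseteq> N \<and> countable (X - Y))}"

text \<open>Path preserving bisimulation (conditions (1)-(7)); path sets are all paths.\<close>
definition pp_bisim ::
  "'a set \<Rightarrow> ('a \<Rightarrow> 'a set set) \<Rightarrow> ('a \<Rightarrow> nat set) \<Rightarrow>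
   'b set \<Rightarrow> ('b \<Rightarrow> 'b set set) \<Rightarrow> ('b \<Rightarrow> nat set) \<Rightarrow>
   ('a \<times> 'b) set \<Rightarrow> (((real \<Rightarrow> 'a) \<times> real) \<times> ((real \<Rightarrow> 'b) \<times> real)) set \<Rightarrow>
   (((real \<Rightarrow> 'b) \<times> real) \<times> ((real \<Rightarrow> 'a) \<times> real)) set \<Rightarrow> bool" where
  "pp_bisim X1 N1 V1 X2 N2 V2 ZN Z1 Z2 \<longleftrightarrow>
     ZN \<noteq> {} \<and> ZN \<subseteq> X1 \<times> X2 \<and>
     (\<forall>((p,n),(q,m))\<in>Z1. npath X1 N1 p \<and> npath X2 N2 q) \<and>
     (\<forall>((q,m),(p,n))\<in>Z2. npath X2 N2 q \<and> npath X1 N1 p) \<and>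
     (\<forall>(x1,x2)\<in>ZN. V1 x1 = V2 x2 \<and>
        (\<forall>M2\<in>N2 x2. \<exists>M1\<in>N1 x1. \<forall>y1\<in>M1. \<exists>y2\<in>M2. (y1,y2) \<in> ZN) \<and>
        (\<forall>M1\<in>N1 x1. \<exists>M2\<in>N2 x2. \<forall>y2\<in>M2. \<exists>y1\<in>M1. (y1,y2) \<in> ZN)) \<and>
     (\<forall>(x1,x2)\<in>ZN. \<forall>p n. npath X1 N1 p \<and> p 0 = x1 \<and> n \<noteq> 0 \<longrightarrow>
        (\<exists>q m. npath X2 N2 q \<and> q 0 = x2 \<and> (p n, q m) \<in> ZN \<and> ((p,n),(q,m)) \<in> Z1)) \<and>
     (\<forall>(x1,x2)\<in>ZN. \<forall>p n. npath X1 N1 p \<and> p n = x1 \<and> n \<noteq> 0 \<longrightarrow>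
        (\<exists>q m. npath X2 N2 q \<and> q m = x2 \<and> (p 0, q 0) \<in> ZN \<and> ((p,n),(q,m)) \<in> Z1)) \<and>
     (\<forall>p n q m kq. ((p,n),(q,m)) \<in> Z1 \<and> 0 < kq \<and> kq < m \<longrightarrow>
        (\<exists>kp. 0 < kp \<and> kp < n \<and> (p kp, q kq) \<in> ZN)) \<and>
     (\<forall>(x1,x2)\<in>ZN. \<forall>q m. npath X2 N2 q \<and> q 0 = x2 \<and> m \<noteq> 0 \<longrightarrow>
        (\<exists>p n. npath X1 N1 p \<and> p 0 = x1 \<and> (p n, q m) \<in> ZN \<and> ((q,m),(p,n)) \<in> Z2)) \<and>
     (\<forall>(x1,x2)\<in>ZN. \<forall>q m. npath X2 N2 q \<and> q m = x2 \<and> m \<noteq> 0 \<longrightarrow>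
        (\<exists>p n. npath X1 N1 p \<and> p n = x1 \<and> (p 0, q 0) \<in> ZN \<and> ((q,m),(p,n)) \<in> Z2)) \<and>
     (\<forall>q m p n kp. ((q,m),(p,n)) \<in> Z2 \<and> 0 < kp \<and> kp < n \<longrightarrow>
        (\<exists>kq. 0 < kq \<and> kq < m \<and> (p kp, q kq) \<in> ZN))"

end

theory Submission
  imports Defs
begin

text \<open>On an indiscrete space with empty valuation every formula holds either everywhere or nowhere,
  since constant paths witness the path operators. So no formula distinguishes the one-point space,
  which is \<open>T\<^sub>1\<close>, from the two-point indiscrete space, which is not.
  The double pointed countable complement topology is the preimage of the countable complement
  topology under the projection forgetting the doubling. The projection and its sections
  \<open>x \<mapsto> (x, b)\<close> transport paths in both directions, which yields the bisimulation.\<close>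

lemma npath_const:
  assumes "nbh_space X Nb" "x \<in> X"
  shows "npath X Nb (\<lambda>_. x)"
  using assms unfolding npath_def nbh_space_def by (auto intro: exI[of _ UNIV])

subsection \<open>Indiscrete spaces\<close>

fun indiscrete_truth :: "slcs \<Rightarrow> bool" where
  "indiscrete_truth (Atom a) = False"
| "indiscrete_truth Top = True"
| "indiscrete_truth (Neg \<phi>) = (\<not> indiscrete_truth \<phi>)"
| "indiscrete_truth (Conj \<phi> \<psi>) = (indiscrete_truth \<phi> \<and> indiscrete_truth \<psi>)"
| "indiscrete_truth (Near \<phi>) = indiscrete_truth \<phi>"
| "indiscrete_truth (Reach \<phi> \<psi>) = indiscrete_truth \<psi>"
| "indiscrete_truth (Pass \<phi> \<psi>) = indiscrete_truth \<psi>"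

lemma nbh_space_indiscrete: "nbh_space X (\<lambda>_. {X})"
  unfolding nbh_space_def filter_on_def by auto

lemma topological_nbh_indiscrete: "X \<noteq> {} \<Longrightarrow> topological_nbh X (\<lambda>_. {X})"
  unfolding topological_nbh_def nbh_space_def filter_on_def by auto

lemma sem_indiscrete:
  assumes "X \<noteq> {}"
  shows "sem X (\<lambda>_. {X}) (\<lambda>_. {}) \<phi> = (if indiscrete_truth \<phi> then X else {})"
proof (induction \<phi>)
  case (Near \<phi>)
  then show ?case using assms by (auto simp: nclosure_def)
next
  case (Reach \<phi> \<psi>)
  show ?case
  proof (cases "indiscrete_truth \<psi>")
    case True
    have "\<exists>p n. npath X (\<lambda>_. {X}) p \<and> p n = x \<and> p 0 \<in> sem X (\<lambda>_. {X}) (\<lambda>_. {}) \<psi> \<and>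
        (\<forall>i. 0 < i \<and> i \<le> n \<longrightarrow> p i \<in> sem X (\<lambda>_. {X}) (\<lambda>_. {}) \<phi>)" if "x \<in> X" for x
      using True Reach npath_const[OF nbh_space_indiscrete that]
      by (intro exI[of _ "\<lambda>_. x"] exI[of _ 0]) (auto simp: that)
    with True show ?thesis by auto
  qed (use Reach in auto)
next
  case (Pass \<phi> \<psi>)
  show ?case
  proof (cases "indiscrete_truth \<psi>")
    case True
    have "\<exists>p n. npath X (\<lambda>_. {X}) p \<and> p 0 = x \<and> p n \<in> sem X (\<lambda>_. {X}) (\<lambda>_. {}) \<psi> \<and>
        (\<forall>i. 0 \<le> i \<and> i < n \<longrightarrow> p i \<in> sem X (\<lambda>_. {X}) (\<lambda>_. {}) \<phi>)" if "x \<in> X" for x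
      using True Pass npath_const[OF nbh_space_indiscrete that]
      by (intro exI[of _ "\<lambda>_. x"] exI[of _ 0]) (auto simp: that)
    with True show ?thesis by auto
  qed (use Pass in auto)
qed auto

lemma no_formula_defines_T1:
  fixes a b :: 'a
  assumes "a \<noteq> b"
  shows "\<not> (\<exists>\<phi>. \<forall>(X :: 'a set) Nb V. topological_nbh X Nb \<longrightarrow>
              (T1_sep X Nb \<longleftrightarrow> (\<forall>x\<in>X. x \<in> sem X Nb V \<phi>)))"
proof
  assume "\<exists>\<phi>. \<forall>(X :: 'a set) Nb V. topological_nbh X Nb \<longrightarrow>
              (T1_sep X Nb \<longleftrightarrow> (\<forall>x\<in>X. x \<in> sem X Nb V \<phi>))"
  then obtain \<phi> where \<phi>: "\<And>(X :: 'a set) Nb V. topological_nbh X Nb \<Longrightarrow>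
      T1_sep X Nb \<longleftrightarrow> (\<forall>x\<in>X. x \<in> sem X Nb V \<phi>)"
    by blast
  have "T1_sep {a} (\<lambda>_. {{a}})" by (auto simp: T1_sep_def)
  with \<phi>[OF topological_nbh_indiscrete, of "{a}" "\<lambda>_. {}"] have "indiscrete_truth \<phi>"
    by (simp add: sem_indiscrete split: if_splits)
  moreover have "\<not> T1_sep {a, b} (\<lambda>_. {{a, b}})"
    using assms by (auto simp: T1_sep_def nclosure_def)
  with \<phi>[OF topological_nbh_indiscrete, of "{a, b}" "\<lambda>_. {}"] have "\<not> indiscrete_truth \<phi>"
    by (simp add: sem_indiscrete split: if_splits)
  ultimately show False by simp
qed

subsection \<open>Preimage neighbourhoods\<close>

definition pullback_nbh :: "'b set \<Rightarrow> ('b \<Rightarrow> 'a) \<Rightarrow> ('a \<Rightarrow> 'a set set) \<Rightarrow> 'b \<Rightarrow> 'b set set" where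
  "pullback_nbh S f Nb z = {N. N \<subseteq> S \<and> (\<exists>M\<in>Nb (f z). f -` M \<inter> S \<subseteq> N)}"

lemma pullback_nbh_preimage:
  "M \<in> Nb (f z) \<Longrightarrow> f -` M \<inter> S \<in> pullback_nbh S f Nb z"
  unfolding pullback_nbh_def by blast

lemma pullback_nbh_mem:
  assumes "\<forall>M\<in>Nb (f z). f z \<in> M" "z \<in> S" "N \<in> pullback_nbh S f Nb z"
  shows "z \<in> N"
  using assms unfolding pullback_nbh_def by blast

lemma filter_on_pullback_nbh:
  assumes filter: "filter_on X (Nb (f z))" and mem: "\<forall>M\<in>Nb (f z). f z \<in> M" and z: "z \<in> S"
  shows "filter_on S (pullback_nbh S f Nb z)"
proof -
  have "{} \<notin> pullback_nbh S f Nb z" using pullback_nbh_mem[of Nb f z S "{}"] mem z by blast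
  moreover have "S \<in> pullback_nbh S f Nb z"
  proof -
    have "Nb (f z) \<noteq> {}" using filter unfolding filter_on_def by blast
    then obtain M where "M \<in> Nb (f z)" by blast
    then show ?thesis unfolding pullback_nbh_def by blast
  qed
  moreover have "pullback_nbh S f Nb z \<subseteq> Pow S" unfolding pullback_nbh_def by blast
  moreover have "N1 \<inter> N2 \<in> pullback_nbh S f Nb z"
    if N: "N1 \<in> pullback_nbh S f Nb z" "N2 \<in> pullback_nbh S f Nb z" for N1 N2
  proof -
    obtain M1 M2 where M: "M1 \<in> Nb (f z)" "M2 \<in> Nb (f z)"
      "f -` M1 \<inter> S \<subseteq> N1" "f -` M2 \<inter> S \<subseteq> N2" "N1 \<subseteq> S"
      using N unfolding pullback_nbh_def by blast
    moreover have "M1 \<inter> M2 \<in> Nb (f z)"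
      using filter M(1,2) unfolding filter_on_def by blast
    moreover have "f -` (M1 \<inter> M2) \<inter> S \<subseteq> N1 \<inter> N2" using M by blast
    ultimately show ?thesis unfolding pullback_nbh_def by blast
  qed
  moreover have "N' \<in> pullback_nbh S f Nb z"
    if "N \<in> pullback_nbh S f Nb z" "N \<subseteq> N'" "N' \<subseteq> S" for N N'
    using that unfolding pullback_nbh_def by blast
  ultimately show ?thesis unfolding filter_on_def by blast
qed

lemma topological_nbh_pullback:
  assumes top: "topological_nbh X Nb" and f: "f ` S \<subseteq> X"
  shows "topological_nbh S (pullback_nbh S f Nb)"
  unfolding topological_nbh_def nbh_space_def
proof (intro conjI ballI)
  fix z assume z: "z \<in> S"
  then have filter: "filter_on X (Nb (f z))" and mem: "\<forall>M\<in>Nb (f z). f z \<in> M"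
    using top f unfolding topological_nbh_def nbh_space_def by auto
  show "filter_on S (pullback_nbh S f Nb z)" using filter mem z by (rule filter_on_pullback_nbh)
  show "z \<in> N" if "N \<in> pullback_nbh S f Nb z" for N using mem z that by (rule pullback_nbh_mem)
  show "\<exists>M\<in>pullback_nbh S f Nb z. \<forall>w\<in>M. N \<in> pullback_nbh S f Nb w"
    if N: "N \<in> pullback_nbh S f Nb z" for N
  proof -
    obtain M where M: "M \<in> Nb (f z)" "f -` M \<inter> S \<subseteq> N" "N \<subseteq> S"
      using N unfolding pullback_nbh_def by blast
    then obtain M' where M': "M' \<in> Nb (f z)" "\<forall>y\<in>M'. M \<in> Nb y"
      using top z f unfolding topological_nbh_def by blast
    have "N \<in> pullback_nbh S f Nb w" if "w \<in> f -` M' \<inter> S" for w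
      using M M' that unfolding pullback_nbh_def by blast
    with pullback_nbh_preimage[of M' Nb f z S] M'(1) show ?thesis by blast
  qed
qed

lemma npath_pullback_comp:
  assumes f: "f ` S \<subseteq> X" and q: "npath S (pullback_nbh S f Nb) q"
  shows "npath X Nb (f \<circ> q)"
proof -
  have "\<exists>U. open U \<and> t \<in> U \<and> U \<subseteq> (f \<circ> q) -` M" if M: "M \<in> Nb (f (q t))" for t M
  proof -
    have "f -` M \<inter> S \<in> pullback_nbh S f Nb (q t)" using M by (rule pullback_nbh_preimage)
    then obtain U where "open U" "t \<in> U" "U \<subseteq> q -` (f -` M \<inter> S)"
      using q unfolding npath_def by blast
    then show ?thesis by (intro exI[of _ U]) auto
  qed
  moreover have "range q \<subseteq> S" using q unfolding npath_def by blast
  moreover from this have "range (f \<circ> q) \<subseteq> X"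
    using f unfolding image_comp[symmetric] by (meson image_mono order_trans)
  ultimately show ?thesis unfolding npath_def o_apply by blast
qed

lemma npath_pullbackI:
  assumes q: "range q \<subseteq> S" "npath X Nb (f \<circ> q)"
  shows "npath S (pullback_nbh S f Nb) q"
proof -
  have "\<exists>U. open U \<and> t \<in> U \<and> U \<subseteq> q -` N" if N: "N \<in> pullback_nbh S f Nb (q t)" for t N
  proof -
    obtain M where M: "M \<in> Nb (f (q t))" "f -` M \<inter> S \<subseteq> N"
      using N unfolding pullback_nbh_def by blast
    moreover have "\<forall>M\<in>Nb (f (q t)). \<exists>U. open U \<and> t \<in> U \<and> U \<subseteq> (f \<circ> q) -` M"
      using q(2) unfolding npath_def by simp
    then obtain U where U: "open U" "t \<in> U" "U \<subseteq> (f \<circ> q) -` M"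
      using M(1) by blast
    have "q u \<in> N" if "u \<in> U" for u
    proof -
      have "f (q u) \<in> M" using U(3) that by auto
      then show ?thesis using M(2) q(1) by blast
    qed
    with U(1,2) show ?thesis by blast
  qed
  then show ?thesis using q(1) unfolding npath_def by blast
qed

lemma npath_pullback_section:
  assumes p: "npath X Nb p" and g: "g ` X \<subseteq> S" "\<forall>x\<in>X. f (g x) = x"
  shows "npath S (pullback_nbh S f Nb) (g \<circ> p)"
proof (rule npath_pullbackI)
  have p_in: "p t \<in> X" for t using p unfolding npath_def by blast
  then show "range (g \<circ> p) \<subseteq> S" using g(1) by auto
  have "f \<circ> (g \<circ> p) = p" using p_in g(2) by auto
  then show "npath X Nb (f \<circ> (g \<circ> p))" using p by simp
qed

lemma pullback_nbh_back_and_forth: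
  assumes Nb: "nbh_space X Nb" and f: "f ` S \<subseteq> X" and z: "z \<in> S"
    and surj: "\<And>x. x \<in> X \<Longrightarrow> \<exists>w\<in>S. f w = x"
  shows "\<forall>N'\<in>pullback_nbh S f Nb z. \<exists>N\<in>Nb (f z). \<forall>x\<in>N. \<exists>w\<in>N'. (x, w) \<in> {(f z, z) | z. z \<in> S}"
    and "\<forall>N\<in>Nb (f z). \<exists>N'\<in>pullback_nbh S f Nb z. \<forall>w\<in>N'. \<exists>x\<in>N. (x, w) \<in> {(f z, z) | z. z \<in> S}"
proof -
  show "\<forall>N'\<in>pullback_nbh S f Nb z. \<exists>N\<in>Nb (f z). \<forall>x\<in>N. \<exists>w\<in>N'. (x, w) \<in> {(f z, z) | z. z \<in> S}"
  proof
    fix N' assume "N' \<in> pullback_nbh S f Nb z"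
    then obtain N where N: "N \<in> Nb (f z)" "f -` N \<inter> S \<subseteq> N'"
      unfolding pullback_nbh_def by blast
    have "N \<subseteq> X" using Nb f z N(1) unfolding nbh_space_def filter_on_def by blast
    have "\<exists>w\<in>N'. (x, w) \<in> {(f z, z) | z. z \<in> S}" if x: "x \<in> N" for x
    proof -
      obtain w where "w \<in> S" "f w = x" using surj x \<open>N \<subseteq> X\<close> by blast
      then show ?thesis using N(2) x by blast
    qed
    with N(1) show "\<exists>N\<in>Nb (f z). \<forall>x\<in>N. \<exists>w\<in>N'. (x, w) \<in> {(f z, z) | z. z \<in> S}" by blast
  qed
  show "\<forall>N\<in>Nb (f z). \<exists>N'\<in>pullback_nbh S f Nb z. \<forall>w\<in>N'. \<exists>x\<in>N. (x, w) \<in> {(f z, z) | z. z \<in> S}"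
  proof
    fix N assume "N \<in> Nb (f z)"
    then have "f -` N \<inter> S \<in> pullback_nbh S f Nb z" by (rule pullback_nbh_preimage)
    moreover have "\<forall>w\<in>f -` N \<inter> S. \<exists>x\<in>N. (x, w) \<in> {(f z, z) | z. z \<in> S}" by blast
    ultimately show "\<exists>N'\<in>pullback_nbh S f Nb z. \<forall>w\<in>N'. \<exists>x\<in>N. (x, w) \<in> {(f z, z) | z. z \<in> S}"
      by blast
  qed
qed

lemma ball_graph: "(\<And>z. z \<in> S \<Longrightarrow> P (f z) z) \<Longrightarrow> \<forall>(x, w)\<in>{(f z, z) | z. z \<in> S}. P x w"
  by auto

lemma pp_bisim_pullback:
  assumes Nb: "nbh_space X Nb" and f: "f ` S \<subseteq> X" and "S \<noteq> {}"
    and sections: "\<And>z. z \<in> S \<Longrightarrow> \<exists>g. g (f z) = z \<and> g ` X \<subseteq> S \<and> (\<forall>x\<in>X. f (g x) = x)"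
  shows "pp_bisim X Nb V S (pullback_nbh S f Nb) (V \<circ> f) {(f z, z) | z. z \<in> S}
    {((p, n), (g \<circ> p, n)) | p n g. npath X Nb p \<and> g ` X \<subseteq> S \<and> (\<forall>x\<in>X. f (g x) = x)}
    {((q, m), (f \<circ> q, m)) | q m. npath S (pullback_nbh S f Nb) q}"
    (is "pp_bisim _ _ _ _ ?Nb' _ ?Z ?Z1 ?Z2")
proof -
  have surj: "\<exists>w\<in>S. f w = x" if "x \<in> X" for x
  proof -
    obtain z where "z \<in> S" using \<open>S \<noteq> {}\<close> by blast
    then obtain g where "g ` X \<subseteq> S" "\<forall>x\<in>X. f (g x) = x" using sections by blast
    then show ?thesis using that by blast
  qed
  have path_in_Z: "(p t, g (p t)) \<in> ?Z" if "npath X Nb p" "g ` X \<subseteq> S" "\<forall>x\<in>X. f (g x) = x" for p g t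
  proof -
    have "p t \<in> X" using that(1) unfolding npath_def by blast
    then show ?thesis using that(2,3) by force
  qed
  have path_in_S: "q t \<in> S" if "npath S ?Nb' q" for q t
    using that unfolding npath_def by blast
  have lift: "\<exists>q m. npath S ?Nb' q \<and> q 0 = z \<and> (p n, q m) \<in> ?Z \<and> ((p, n), (q, m)) \<in> ?Z1"
    if z: "z \<in> S" and p: "npath X Nb p" and "p 0 = f z" for z p n
  proof -
    obtain g where g: "g (f z) = z" "g ` X \<subseteq> S" "\<forall>x\<in>X. f (g x) = x" using sections z by blast
    show ?thesis
      using g p \<open>p 0 = f z\<close> npath_pullback_section[OF p g(2,3)] path_in_Z[OF p g(2,3)]
      by (intro exI[of _ "g \<circ> p"] exI[of _ n]) auto
  qed
  have lift_end: "\<exists>q m. npath S ?Nb' q \<and> q m = z \<and> (p 0, q 0) \<in> ?Z \<and> ((p, n), (q, m)) \<in> ?Z1"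
    if z: "z \<in> S" and p: "npath X Nb p" and "p n = f z" for z p n
  proof -
    obtain g where g: "g (f z) = z" "g ` X \<subseteq> S" "\<forall>x\<in>X. f (g x) = x" using sections z by blast
    show ?thesis
      using g p \<open>p n = f z\<close> npath_pullback_section[OF p g(2,3)] path_in_Z[OF p g(2,3)]
      by (intro exI[of _ "g \<circ> p"] exI[of _ n]) auto
  qed
  have "?Z \<noteq> {} \<and> ?Z \<subseteq> X \<times> S" using \<open>S \<noteq> {}\<close> f by blast
  moreover have "\<forall>((p, n), (q, m))\<in>?Z1. npath X Nb p \<and> npath S ?Nb' q"
    using npath_pullback_section by blast
  moreover have "\<forall>((q, m), (p, n))\<in>?Z2. npath S ?Nb' q \<and> npath X Nb p"
    using npath_pullback_comp[OF f] by blast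
  moreover have "\<forall>(x, w)\<in>?Z. V x = (V \<circ> f) w \<and>
      (\<forall>N'\<in>?Nb' w. \<exists>N\<in>Nb x. \<forall>y\<in>N. \<exists>y'\<in>N'. (y, y') \<in> ?Z) \<and>
      (\<forall>N\<in>Nb x. \<exists>N'\<in>?Nb' w. \<forall>y'\<in>N'. \<exists>y\<in>N. (y, y') \<in> ?Z)"
    using pullback_nbh_back_and_forth[OF Nb f _ surj] by (intro ball_graph) auto
  moreover have "\<forall>(x, w)\<in>?Z. \<forall>p n. npath X Nb p \<and> p 0 = x \<and> n \<noteq> 0 \<longrightarrow>
      (\<exists>q m. npath S ?Nb' q \<and> q 0 = w \<and> (p n, q m) \<in> ?Z \<and> ((p, n), (q, m)) \<in> ?Z1)"
    using lift by (intro ball_graph) blast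
  moreover have "\<forall>(x, w)\<in>?Z. \<forall>p n. npath X Nb p \<and> p n = x \<and> n \<noteq> 0 \<longrightarrow>
      (\<exists>q m. npath S ?Nb' q \<and> q m = w \<and> (p 0, q 0) \<in> ?Z \<and> ((p, n), (q, m)) \<in> ?Z1)"
    using lift_end by (intro ball_graph) blast
  moreover have "\<forall>p n q m k. ((p, n), (q, m)) \<in> ?Z1 \<and> 0 < k \<and> k < m \<longrightarrow>
      (\<exists>k'. 0 < k' \<and> k' < n \<and> (p k', q k) \<in> ?Z)"
    using path_in_Z by fastforce
  moreover have "\<forall>(x, w)\<in>?Z. \<forall>q m. npath S ?Nb' q \<and> q 0 = w \<and> m \<noteq> 0 \<longrightarrow>
      (\<exists>p n. npath X Nb p \<and> p 0 = x \<and> (p n, q m) \<in> ?Z \<and> ((q, m), (p, n)) \<in> ?Z2)"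
    using npath_pullback_comp[OF f] path_in_S by (intro ball_graph) force
  moreover have "\<forall>(x, w)\<in>?Z. \<forall>q m. npath S ?Nb' q \<and> q m = w \<and> m \<noteq> 0 \<longrightarrow>
      (\<exists>p n. npath X Nb p \<and> p n = x \<and> (p 0, q 0) \<in> ?Z \<and> ((q, m), (p, n)) \<in> ?Z2)"
    using npath_pullback_comp[OF f] path_in_S by (intro ball_graph) force
  moreover have "\<forall>q m p n k. ((q, m), (p, n)) \<in> ?Z2 \<and> 0 < k \<and> k < n \<longrightarrow>
      (\<exists>k'. 0 < k' \<and> k' < m \<and> (p k, q k') \<in> ?Z)"
    using path_in_S by fastforce
  ultimately show ?thesis unfolding pp_bisim_def by blast
qed

subsection \<open>Countable complement topologies\<close>

lemma ccc_nbh_eq: "ccc_nbh X x = {N. x \<in> N \<and> N \<subseteq> X \<and> countable (X - N)}"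
proof (intro set_eqI iffI)
  fix N assume "N \<in> ccc_nbh X x"
  then obtain Y where "x \<in> Y" "Y \<subseteq> N" "N \<subseteq> X" "countable (X - Y)"
    unfolding ccc_nbh_def by blast
  moreover from this have "X - N \<subseteq> X - Y" by blast
  ultimately show "N \<in> {N. x \<in> N \<and> N \<subseteq> X \<and> countable (X - N)}"
    using countable_subset by blast
next
  fix N assume "N \<in> {N. x \<in> N \<and> N \<subseteq> X \<and> countable (X - N)}"
  then show "N \<in> ccc_nbh X x" unfolding ccc_nbh_def by blast
qed

lemma topological_nbh_ccc: "topological_nbh X (ccc_nbh X)"
  unfolding topological_nbh_def nbh_space_def
proof (intro conjI ballI)
  fix x assume "x \<in> X"
  then have "X \<in> ccc_nbh X x" unfolding ccc_nbh_eq by simp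
  moreover have "A \<inter> B \<in> ccc_nbh X x" if "A \<in> ccc_nbh X x" "B \<in> ccc_nbh X x" for A B
    using that unfolding ccc_nbh_eq by (auto simp: Diff_Int)
  moreover have "B \<in> ccc_nbh X x" if "A \<in> ccc_nbh X x" "A \<subseteq> B" "B \<subseteq> X" for A B
  proof -
    have "X - B \<subseteq> X - A" using that(2) by blast
    then show ?thesis using that countable_subset unfolding ccc_nbh_eq by blast
  qed
  moreover have "ccc_nbh X x \<subseteq> Pow X" "{} \<notin> ccc_nbh X x" unfolding ccc_nbh_eq by auto
  ultimately show "filter_on X (ccc_nbh X x)" unfolding filter_on_def by blast
  show "x \<in> N" if "N \<in> ccc_nbh X x" for N using that unfolding ccc_nbh_eq by blast
  show "\<exists>M\<in>ccc_nbh X x. \<forall>y\<in>M. N \<in> ccc_nbh X y" if "N \<in> ccc_nbh X x" for N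
    using that unfolding ccc_nbh_eq by blast
qed

lemma T1_sep_ccc: "T1_sep X (ccc_nbh X)"
proof -
  have not_in_closure: "y \<notin> nclosure X (ccc_nbh X) {x}" if "x \<noteq> y" for x y
  proof
    assume y: "y \<in> nclosure X (ccc_nbh X) {x}"
    then have "y \<in> X" and meets: "\<forall>N\<in>ccc_nbh X y. {x} \<inter> N \<noteq> {}"
      unfolding nclosure_def by simp_all
    have "countable (X - (X - {x}))" by (rule countable_subset[of _ "{x}"]) auto
    with that \<open>y \<in> X\<close> have "X - {x} \<in> ccc_nbh X y" unfolding ccc_nbh_eq by simp
    with meets show False by blast
  qed
  show ?thesis unfolding T1_sep_def
  proof (intro ballI impI conjI)
    fix x y :: 'a assume "x \<noteq> y"
    then show "{x} \<inter> nclosure X (ccc_nbh X) {y} = {}" "nclosure X (ccc_nbh X) {x} \<inter> {y} = {}"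
      using not_in_closure[of y x] not_in_closure[of x y] by auto
  qed
qed

lemma not_T1_sep_dccc:
  assumes "x \<in> X"
  shows "\<not> T1_sep (X \<times> UNIV) (dccc_nbh X)"
proof
  have "N \<inter> {(x, True)} \<noteq> {}" if N: "N \<in> dccc_nbh X (x, False)" for N
  proof -
    obtain Y where "x \<in> Y" "Y \<times> UNIV \<subseteq> N" using N unfolding dccc_nbh_def by auto
    then show ?thesis by blast
  qed
  then have "(x, False) \<in> nclosure (X \<times> UNIV) (dccc_nbh X) {(x, True)}"
    using assms unfolding nclosure_def by blast
  moreover assume "T1_sep (X \<times> UNIV) (dccc_nbh X)"
  then have "nclosure (X \<times> UNIV) (dccc_nbh X) {(x, True)} \<inter> {(x, False)} = {}"
    using assms unfolding T1_sep_def by simp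
  ultimately show False by blast
qed

lemma dccc_nbh_eq_pullback: "dccc_nbh X = pullback_nbh (X \<times> UNIV) fst (ccc_nbh X)"
proof (intro ext set_eqI iffI)
  fix z :: "'a \<times> bool" and N assume "N \<in> dccc_nbh X z"
  then obtain Y where Y: "fst z \<in> Y" "Y \<times> UNIV \<subseteq> N" "N \<subseteq> X \<times> UNIV" "countable (X - Y)"
    unfolding dccc_nbh_def by blast
  then have "Y \<subseteq> X" by blast
  with Y have "Y \<in> ccc_nbh X (fst z)" unfolding ccc_nbh_def by blast
  moreover have "fst -` Y \<inter> X \<times> UNIV \<subseteq> N" using Y(2) by auto
  ultimately show "N \<in> pullback_nbh (X \<times> UNIV) fst (ccc_nbh X) z"
    using Y(3) unfolding pullback_nbh_def by blast
next
  fix z :: "'a \<times> bool" and N assume "N \<in> pullback_nbh (X \<times> UNIV) fst (ccc_nbh X) z"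
  then obtain M where M: "M \<in> ccc_nbh X (fst z)" "fst -` M \<inter> X \<times> UNIV \<subseteq> N" "N \<subseteq> X \<times> UNIV"
    unfolding pullback_nbh_def by blast
  then have "M \<times> UNIV \<subseteq> N" unfolding ccc_nbh_eq by auto
  with M show "N \<in> dccc_nbh X z" unfolding ccc_nbh_eq dccc_nbh_def by blast
qed

lemma topological_nbh_dccc: "topological_nbh (X \<times> UNIV) (dccc_nbh X)"
  unfolding dccc_nbh_eq_pullback using topological_nbh_ccc by (rule topological_nbh_pullback) auto

lemma pp_bisim_dccc:
  assumes "X \<noteq> {}"
  shows "\<exists>Z1 Z2. pp_bisim X (ccc_nbh X) V (X \<times> UNIV) (dccc_nbh X) (\<lambda>(x, b). V x)
    {(x, (x, b)) | x b. x \<in> X} Z1 Z2"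
proof -
  have "nbh_space X (ccc_nbh X)" using topological_nbh_ccc unfolding topological_nbh_def by blast
  moreover have "fst ` (X \<times> UNIV) \<subseteq> X" "X \<times> UNIV \<noteq> {}" using assms by auto
  moreover have "\<exists>g. g (fst z) = z \<and> g ` X \<subseteq> X \<times> UNIV \<and> (\<forall>x\<in>X. fst (g x) = x)" for z :: "'a \<times> bool"
    by (rule exI[of _ "\<lambda>x. (x, snd z)"]) auto
  ultimately have bisim: "pp_bisim X (ccc_nbh X) V (X \<times> UNIV) (dccc_nbh X) (V \<circ> fst)
      {(fst z, z) | z. z \<in> X \<times> UNIV}
      {((p, n), (g \<circ> p, n)) | p n g. npath X (ccc_nbh X) p \<and> g ` X \<subseteq> X \<times> UNIV \<and> (\<forall>x\<in>X. fst (g x) = x)}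
      {((q, m), (fst \<circ> q, m)) | q m. npath (X \<times> UNIV) (dccc_nbh X) q}"
    unfolding dccc_nbh_eq_pullback by (rule pp_bisim_pullback)
  have "V \<circ> fst = (\<lambda>(x, b). V x)" by auto
  moreover have "{(fst z, z) | z. z \<in> X \<times> UNIV} = {(x, (x, b)) | x b. x \<in> X}" by auto
  ultimately show ?thesis using bisim by metis
qed

theorem proposition20:
  assumes "uncountable (UNIV :: 'a set)"
  shows "\<not> (\<exists>\<phi>. \<forall>(X :: 'a set) Nb V. topological_nbh X Nb \<longrightarrow>
              (T1_sep X Nb \<longleftrightarrow> (\<forall>x\<in>X. x \<in> sem X Nb V \<phi>)))
     \<and> (\<forall>(X :: 'a set) (V1 :: 'a \<Rightarrow> nat set). uncountable X \<longrightarrow>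
          topological_nbh X (ccc_nbh X) \<and>
          topological_nbh (X \<times> UNIV) (dccc_nbh X) \<and>
          (\<exists>Z1 Z2. pp_bisim X (ccc_nbh X) V1 (X \<times> UNIV) (dccc_nbh X) (\<lambda>(x,b). V1 x)
                     {(x, (x, b)) | x b. x \<in> X} Z1 Z2) \<and>
          T1_sep X (ccc_nbh X) \<and> \<not> T1_sep (X \<times> UNIV) (dccc_nbh X))"
proof (intro conjI allI impI)
  have "UNIV \<noteq> {undefined :: 'a}" using assms by (metis countable_finite finite.emptyI finite_insert)
  then obtain b :: 'a where "b \<noteq> undefined" by blast
  then show "\<not> (\<exists>\<phi>. \<forall>(X :: 'a set) Nb V. topological_nbh X Nb \<longrightarrow>
      (T1_sep X Nb \<longleftrightarrow> (\<forall>x\<in>X. x \<in> sem X Nb V \<phi>)))"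
    by (rule no_formula_defines_T1)
next
  fix X :: "'a set" and V1 :: "'a \<Rightarrow> nat set"
  assume "uncountable X"
  then obtain x where x: "x \<in> X" by (metis countable_empty equals0I)
  then show "\<exists>Z1 Z2. pp_bisim X (ccc_nbh X) V1 (X \<times> UNIV) (dccc_nbh X) (\<lambda>(x,b). V1 x)
      {(x, (x, b)) | x b. x \<in> X} Z1 Z2"
    by (intro pp_bisim_dccc) blast
  show "\<not> T1_sep (X \<times> UNIV) (dccc_nbh X)" using x by (rule not_T1_sep_dccc)
qed (rule topological_nbh_ccc topological_nbh_dccc T1_sep_ccc)+

end
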